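(* There exist a Bayes-adaptive MDP $M^+$ and task-dependent behavior policies $[\mu]$ such that, for every batch-constrained meta-policy $\pi^+$: (i) executing $\pi^+$ in $M^+$ visits hyper-states that are not contained in the offline dataset $\mathcal D^+$ (out-of-distribution hyper-states); and (ii) $\big|\mathcal J_{\mathcal D^+}(\pi^+)-\mathcal J_{M^+}(\pi^+)\big|\ge \frac{H^+-1}{2}$.
   Context: Tasks: a distribution $p(\kappa)$ over finite-horizon MDPs $(\mathcal S,\mathcal A,\mathcal R,H,P^\kappa,R^\kappa)$ with common finite spaces, horizon $H$, fixed initial state $s_0$, rewards in $[0,1]$; the agent interacts with one sampled task for $N$ episodes, total horizon $H^+=NH$. The BAMDP $M^+$ has hyper-states $s_t^+=(s_t,b_t)$ with $b_t=p(\kappa\mid c_{:t})$ the Bayesian posterior over tasks given the history $c_{:t}$ of states, actions, rewards; rewards $R^+(r\mid s^+,a)=\mathbb E_{\kappa\sim b}[R^\kappa(r\mid s,a)]$, state transitions $P^+(s'\mid s^+,a)=\mathbb E_{\kappa\sim b}[P^\kappa(s'\mid s,a)]$, beliefs updated by Bayes' rule. $\mathcal J_{M^+}(\pi^+)$ is the expected total reward over the $H^+$ steps when a task is drawn from $p$ and the meta-policy $\pi^+$ (a map from hyper-states to action distributions) is executed. Task-dependent behavior policies $[\mu]=p(\mu\mid\kappa)$ are a conditional distribution over policies given the task; the offline dataset $\mathcal D^+$ consists of trajectories collected by sampling $\kappa\sim p$, $\mu\sim p(\mu\mid\kappa)$ and executing $\mu$ in $\kappa$. A meta-policy is batch-constrained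 if it puts zero probability on actions $a$ at hyper-states $s^+$ whenever $(s^+,a)$ is not contained in $\mathcal D^+$. $\mathcal J_{\mathcal D^+}(\pi^+)$ is the offline (approximate dynamic programming) evaluation: the expected total reward over $H^+$ steps when actions are drawn from $\pi^+$ and rewards and next hyper-states are sampled from the empirical distribution of tuples $(s^+,a,r,s'^+)$ in $\mathcal D^+$. *)

theory Defs
  imports "HOL-Probability.Probability"
begin

text \<open>
  A (task-distribution) BAMDP is given by the initial state, the task prior p(kappa),
  the per-task transition kernels P^kappa and reward distributions R^kappa,
  the episode horizon H and the number of episodes N (total horizon H+ = N H).
\<close>

record bamdp =
  states  :: "nat set"
  actions :: "nat set"
  s0      :: nat
  prior   :: "nat pmf"
  trans   :: "nat \<Rightarrow> nat \<Rightarrow> nat \<Rightarrow> nat pmf"   (* kappa, s, a  ->  P^kappa(. | s,a) *)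
  rew     :: "nat \<Rightarrow> nat \<Rightarrow> nat \<Rightarrow> real pmf"  (* kappa, s, a  ->  R^kappa(. | s,a) *)
  hor     :: nat
  neps    :: nat

definition Hplus :: "bamdp \<Rightarrow> nat" where
  "Hplus M = neps M * hor M"

text \<open>Hyper-states: pairs of an underlying state and a belief over tasks.\<close>
type_synonym hstate = "nat \<times> nat pmf"

text \<open>Task-dependent behaviour policies: for each task a distribution over
  (stationary) policies of the underlying MDP.\<close>
type_synonym behaviour = "nat \<Rightarrow> (nat \<Rightarrow> nat pmf) pmf"

type_synonym metapolicy = "hstate \<Rightarrow> nat pmf"

definition valid_setting :: "bamdp \<Rightarrow> behaviour \<Rightarrow> bool" where
  "valid_setting M mu \<longleftrightarrow>
     finite (states M) \<and> finite (actions M) \<and> actions M \<noteq> {} \<and> s0 M \<in> states M \<and>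
     hor M \<ge> 1 \<and> neps M \<ge> 1 \<and>
     (\<forall>k s a. s \<in> states M \<longrightarrow> a \<in> actions M \<longrightarrow>
         set_pmf (trans M k s a) \<subseteq> states M \<and> set_pmf (rew M k s a) \<subseteq> {0..1}) \<and>
     (\<forall>k pol. pol \<in> set_pmf (mu k) \<longrightarrow> (\<forall>s \<in> states M. set_pmf (pol s) \<subseteq> actions M))"

text \<open>Observation (reward, next state) at global time step t in task k.  At the last
  step of an episode the state is reset to s0 (which carries no information).\<close>
definition obs :: "bamdp \<Rightarrow> nat \<Rightarrow> nat \<Rightarrow> nat \<Rightarrow> nat \<Rightarrow> (real \<times> nat) pmf" where
  "obs M k t s a =
     (if Suc t mod hor M = 0 then map_pmf (\<lambda>r. (r, s0 M)) (rew M k s a)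
      else pair_pmf (rew M k s a) (trans M k s a))"

definition posterior :: "nat pmf \<Rightarrow> (nat \<Rightarrow> 'o pmf) \<Rightarrow> 'o \<Rightarrow> nat pmf" where
  "posterior b L ob =
     map_pmf fst (cond_pmf (bind_pmf b (\<lambda>k. map_pmf (\<lambda>x. (k, x)) (L k))) {y. snd y = ob})"

definition step :: "bamdp \<Rightarrow> nat \<Rightarrow> nat \<Rightarrow> hstate \<Rightarrow> nat \<Rightarrow> (real \<times> hstate) pmf" where
  "step M k t x a =
     map_pmf (\<lambda>(r, s'). (r, (s', posterior (snd x) (\<lambda>k'. obs M k' t (fst x) a) (r, s'))))
             (obs M k t (fst x) a)"

text \<open>True value: n remaining steps, current time t, hidden task k.\<close>
fun Vtrue :: "bamdp \<Rightarrow> metapolicy \<Rightarrow> nat \<Rightarrow> nat \<Rightarrow> nat \<Rightarrow> hstate \<Rightarrow> real" where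
  "Vtrue M \<pi> k 0 t x = 0"
| "Vtrue M \<pi> k (Suc n) t x =
     measure_pmf.expectation (\<pi> x) (\<lambda>a.
       measure_pmf.expectation (step M k t x a) (\<lambda>(r, x'). r + Vtrue M \<pi> k n (Suc t) x'))"

definition J_true :: "bamdp \<Rightarrow> metapolicy \<Rightarrow> real" where
  "J_true M \<pi> = measure_pmf.expectation (prior M)
                   (\<lambda>k. Vtrue M \<pi> k (Hplus M) 0 (s0 M, prior M))"

fun dstate :: "bamdp \<Rightarrow> nat \<Rightarrow> (nat \<Rightarrow> nat pmf) \<Rightarrow> nat \<Rightarrow> hstate pmf" where
  "dstate M k pol 0 = return_pmf (s0 M, prior M)"
| "dstate M k pol (Suc t) =
     bind_pmf (dstate M k pol t) (\<lambda>x. bind_pmf (pol (fst x)) (\<lambda>a. map_pmf snd (step M k t x a)))"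

definition dtuple :: "bamdp \<Rightarrow> nat \<Rightarrow> (nat \<Rightarrow> nat pmf) \<Rightarrow> nat \<Rightarrow> (hstate \<times> nat \<times> real \<times> hstate) pmf" where
  "dtuple M k pol t =
     bind_pmf (dstate M k pol t) (\<lambda>x. bind_pmf (pol (fst x)) (\<lambda>a.
       map_pmf (\<lambda>(r, x'). (x, a, r, x')) (step M k t x a)))"

text \<open>The (idealised, infinite-data) dataset D+: the pooled distribution of all
  transition tuples (s+, a, r, s'+) of trajectories collected with
  k ~ p, mu ~ p(mu | k).\<close>
definition data_dist :: "bamdp \<Rightarrow> behaviour \<Rightarrow> (hstate \<times> nat \<times> real \<times> hstate) pmf" where
  "data_dist M mu =
     bind_pmf (prior M) (\<lambda>k. bind_pmf (mu k) (\<lambda>pol.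
       bind_pmf (pmf_of_set {..<Hplus M}) (\<lambda>t. dtuple M k pol t)))"

definition in_data :: "bamdp \<Rightarrow> behaviour \<Rightarrow> hstate \<Rightarrow> nat \<Rightarrow> bool" where
  "in_data M mu x a \<longleftrightarrow> (\<exists>r x'. (x, a, r, x') \<in> set_pmf (data_dist M mu))"

definition hs_in_data :: "bamdp \<Rightarrow> behaviour \<Rightarrow> hstate \<Rightarrow> bool" where
  "hs_in_data M mu x \<longleftrightarrow> (\<exists>a. in_data M mu x a)"

definition batch_constrained :: "bamdp \<Rightarrow> behaviour \<Rightarrow> metapolicy \<Rightarrow> bool" where
  "batch_constrained M mu \<pi> \<longleftrightarrow>
     (\<forall>x a. hs_in_data M mu x \<longrightarrow> \<not> in_data M mu x a \<longrightarrow> pmf (\<pi> x) a = 0)"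

definition emp :: "bamdp \<Rightarrow> behaviour \<Rightarrow> hstate \<Rightarrow> nat \<Rightarrow> (real \<times> hstate) pmf" where
  "emp M mu x a =
     map_pmf (\<lambda>(_, _, r, x'). (r, x'))
       (cond_pmf (data_dist M mu) {y. fst y = x \<and> fst (snd y) = a})"

fun Voff :: "bamdp \<Rightarrow> behaviour \<Rightarrow> metapolicy \<Rightarrow> nat \<Rightarrow> hstate \<Rightarrow> real" where
  "Voff M mu \<pi> 0 x = 0"
| "Voff M mu \<pi> (Suc n) x =
     measure_pmf.expectation (\<pi> x) (\<lambda>a.
       measure_pmf.expectation (emp M mu x a) (\<lambda>(r, x'). r + Voff M mu \<pi> n x'))"

definition J_off :: "bamdp \<Rightarrow> behaviour \<Rightarrow> metapolicy \<Rightarrow> real" where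
  "J_off M mu \<pi> = Voff M mu \<pi> (Hplus M) (s0 M, prior M)"

inductive visits :: "bamdp \<Rightarrow> metapolicy \<Rightarrow> nat \<Rightarrow> nat \<Rightarrow> hstate \<Rightarrow> bool"
  for M \<pi> k where
  init: "visits M \<pi> k 0 (s0 M, prior M)"
| step_visit: "visits M \<pi> k t x \<Longrightarrow> Suc t < Hplus M \<Longrightarrow> a \<in> set_pmf (\<pi> x) \<Longrightarrow>
         (r, x') \<in> set_pmf (step M k t x a) \<Longrightarrow> visits M \<pi> k (Suc t) x'"

definition visits_ood :: "bamdp \<Rightarrow> behaviour \<Rightarrow> metapolicy \<Rightarrow> bool" where
  "visits_ood M mu \<pi> \<longleftrightarrow>
     (\<exists>k \<in> set_pmf (prior M). \<exists>t x. visits M \<pi> k t x \<and> \<not> hs_in_data M mu x)"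

end

theory Submission
  imports Defs
begin

text \<open>Two equally likely tasks differ only in which action is safe in the initial state 0;
  the other action drops the agent into the absorbing zero-reward state 1.  In each task the
  behaviour policy always plays the safe action, so the data never show the trap, and after one
  observed step the belief is certain of the task.  A batch-constrained policy is therefore
  forced to act safely at every informed hyper-state, and the offline model, which has only seen
  successful first moves, predicts the return \<open>H\<^sup>+\<close>.  In the true BAMDP, however, the first
  action is taken under the uninformed prior and is wrong with probability 1/2, which gives
  \<open>1 + (H\<^sup>+ - 1) / 2\<close>; the trap state it leads to is out of distribution.\<close>

lemma cond_pmf_eq_return_pmf:
  assumes "set_pmf p \<inter> A = {x}"
  shows "cond_pmf p A = return_pmf x"
  by (subst set_pmf_subset_singleton[symmetric]) (use assms in auto)

lemma posterior_deterministic: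
  assumes "set_pmf b \<inter> {k. f k = y} = {k0}"
  shows "posterior b (\<lambda>k. return_pmf (f k)) y = return_pmf k0"
proof -
  have joint: "bind_pmf b (\<lambda>k. map_pmf (\<lambda>z. (k, z)) (return_pmf (f k)))
      = map_pmf (\<lambda>k. (k, f k)) b"
    unfolding map_pmf_def bind_return_pmf by (rule refl)
  have "f k0 = y" using assms by blast
  have "set_pmf (map_pmf (\<lambda>k. (k, f k)) b) \<inter> {z. snd z = y}
          = (\<lambda>k. (k, f k)) ` (set_pmf b \<inter> {k. f k = y})"
    by auto
  also have "\<dots> = {(k0, y)}" using assms \<open>f k0 = y\<close> by simp
  finally show ?thesis
    unfolding posterior_def joint by (simp add: cond_pmf_eq_return_pmf)
qed

lemma expectation_pmf_two_point:
  fixes f :: "'a \<Rightarrow> real"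
  assumes "set_pmf p \<subseteq> {a, b}" "a \<noteq> b"
  shows "measure_pmf.expectation p f = pmf p a * f a + pmf p b * f b"
  using assms by (subst integral_measure_pmf[of "{a, b}"]) auto

lemma pmf_two_point_sum:
  assumes "set_pmf p \<subseteq> {a, b}" "a \<noteq> b"
  shows "pmf p a + pmf p b = 1"
  using expectation_pmf_two_point[OF assms, of "\<lambda>_. 1"] by simp

lemma batch_constrained_forces_action:
  assumes "batch_constrained M mu \<pi>" "in_data M mu x a"
    and "\<And>a'. in_data M mu x a' \<Longrightarrow> a' = a"
  shows "\<pi> x = return_pmf a"
proof -
  have "a' = a" if "a' \<in> set_pmf (\<pi> x)" for a'
  proof (rule ccontr)
    assume "a' \<noteq> a"
    then have "pmf (\<pi> x) a' = 0"
      using assms unfolding batch_constrained_def hs_in_data_def by blast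
    then show False using that by (simp add: set_pmf_eq)
  qed
  then show ?thesis by (auto simp: set_pmf_subset_singleton[symmetric])
qed

abbreviation task_prior :: "nat pmf" where
  "task_prior \<equiv> pmf_of_set {0, 1}"

definition trap_bamdp :: "nat \<Rightarrow> bamdp" where
  "trap_bamdp Hp = \<lparr>states = {0, 1}, actions = {0, 1}, s0 = 0, prior = task_prior,
     trans = (\<lambda>k s a. return_pmf (if s = 0 \<and> a = k then 0 else 1)),
     rew = (\<lambda>k s a. return_pmf (if s = 0 then 1 else 0)),
     hor = Hp, neps = 1\<rparr>"

text \<open>The case distinction only keeps the actions of tasks outside the prior's support
  admissible, as \<^const>\<open>valid_setting\<close> demands for every task.\<close>
definition safe_behaviour :: behaviour where
  "safe_behaviour k = return_pmf (\<lambda>s. return_pmf (if k = 0 then 0 else 1))"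

definition trap_obs :: "nat \<Rightarrow> nat \<Rightarrow> nat \<Rightarrow> nat \<Rightarrow> nat \<Rightarrow> real \<times> nat" where
  "trap_obs Hp k t s a = ((if s = 0 then 1 else 0),
      (if Suc t mod Hp = 0 then 0 else if s = 0 \<and> a = k then 0 else 1))"

lemma trap_bamdp_simps [simp]:
  "states (trap_bamdp Hp) = {0, 1}" "actions (trap_bamdp Hp) = {0, 1}"
  "s0 (trap_bamdp Hp) = 0" "prior (trap_bamdp Hp) = task_prior"
  "Hplus (trap_bamdp Hp) = Hp"
  by (simp_all add: trap_bamdp_def Hplus_def)

lemma step_trap_bamdp:
  "step (trap_bamdp Hp) k t (s, b) a =
     return_pmf (fst (trap_obs Hp k t s a), snd (trap_obs Hp k t s a),
       posterior b (\<lambda>k'. return_pmf (trap_obs Hp k' t s a)) (trap_obs Hp k t s a))"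
proof -
  have "obs (trap_bamdp Hp) k' t s a = return_pmf (trap_obs Hp k' t s a)" for k'
    by (simp add: obs_def trap_obs_def trap_bamdp_def Hplus_def pair_return_pmf1)
  then show ?thesis by (simp add: step_def case_prod_beta)
qed

lemma posterior_informed:
  "posterior (return_pmf k) (\<lambda>k'. return_pmf (trap_obs Hp k' t s a)) (trap_obs Hp k t s a)
     = return_pmf k"
  by (rule posterior_deterministic) auto

text \<open>Only the safe action keeps the agent in state 0, so unless the episode ends there,
  the first move reveals the task.\<close>
lemma posterior_first_move:
  assumes "Suc t mod Hp \<noteq> 0" "a \<in> {0, 1}" "k \<in> {0, 1}"
  shows "posterior task_prior (\<lambda>k'. return_pmf (trap_obs Hp k' t 0 a)) (trap_obs Hp k t 0 a)
           = return_pmf k"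
  by (rule posterior_deterministic) (use assms in \<open>auto simp: trap_obs_def\<close>)

lemma Vtrue_trapped:
  "t + n \<le> Hp \<Longrightarrow> Vtrue (trap_bamdp Hp) \<pi> k n t (1, b) = 0"
proof (induction n arbitrary: t b)
  case 0
  then show ?case by simp
next
  case (Suc n)
  have "Vtrue (trap_bamdp Hp) \<pi> k n (Suc t) (snd (trap_obs Hp k t 1 a), b') = 0" for a b'
  proof (cases n)
    case 0
    then show ?thesis by simp
  next
    case (Suc m)
    with Suc.prems have "snd (trap_obs Hp k t 1 a) = 1" by (simp add: trap_obs_def)
    then show ?thesis using Suc.IH[of "Suc t" b'] Suc.prems by simp
  qed
  then show ?case by (simp add: step_trap_bamdp trap_obs_def)
qed

lemma Vtrue_informed:
  assumes "\<pi> (0, return_pmf k) = return_pmf k"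
  shows "Vtrue (trap_bamdp Hp) \<pi> k n t (0, return_pmf k) = real n"
proof (induction n arbitrary: t)
  case 0
  then show ?case by simp
next
  case (Suc n)
  have "trap_obs Hp k t 0 k = (1, 0)" by (simp add: trap_obs_def)
  with Suc.IH show ?case
    using posterior_informed[of k Hp t 0 k] by (simp add: assms step_trap_bamdp)
qed

context
  fixes Hp :: nat
  assumes Hp: "2 \<le> Hp"
begin

definition data_hstate :: "nat \<Rightarrow> nat \<Rightarrow> hstate" where
  "data_hstate k t = (if t = 0 then (0, task_prior) else (0, return_pmf k))"

lemma step_data_hstate:
  assumes "k \<in> {0, 1}"
  shows "step (trap_bamdp Hp) k t (data_hstate k t) k = return_pmf (1, 0, return_pmf k)"
proof (cases "t = 0")
  case True
  have "Suc 0 mod Hp \<noteq> 0" using Hp by simp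
  then show ?thesis
    using True assms posterior_first_move[of 0 Hp k k]
    by (simp add: data_hstate_def step_trap_bamdp trap_obs_def)
next
  case False
  have "trap_obs Hp k t 0 k = (1, 0)" by (simp add: trap_obs_def)
  then show ?thesis
    using False posterior_informed[of k Hp t 0 k] by (simp add: data_hstate_def step_trap_bamdp)
qed

lemma dtuple_safe:
  assumes "k \<in> {0, 1}"
  shows "dtuple (trap_bamdp Hp) k (\<lambda>s. return_pmf k) t
           = return_pmf (data_hstate k t, k, 1, 0, return_pmf k)"
proof -
  have "dstate (trap_bamdp Hp) k (\<lambda>s. return_pmf k) t = return_pmf (data_hstate k t)"
  proof (induction t)
    case 0
    then show ?case by (simp add: data_hstate_def)
  next
    case (Suc t)
    then show ?case
      by (simp add: bind_return_pmf step_data_hstate[OF assms]) (simp add: data_hstate_def)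
  qed
  then show ?thesis by (simp add: dtuple_def bind_return_pmf step_data_hstate[OF assms])
qed

lemma set_data_dist_trap:
  "set_pmf (data_dist (trap_bamdp Hp) safe_behaviour) =
     {(x, k, 1, 0, return_pmf k) | x k.
        k \<in> {0, 1} \<and> (x = (0, task_prior) \<or> x = (0, return_pmf k))}" (is "_ = ?data")
proof -
  from Hp have "0 \<in> {..<Hp}" by simp
  then have times: "set_pmf (pmf_of_set {..<Hp}) = {..<Hp}"
    by (intro set_pmf_of_set) auto
  have hstates: "data_hstate k ` {..<Hp} = {(0, task_prior), (0, return_pmf k)}" for k
  proof
    show "data_hstate k ` {..<Hp} \<subseteq> {(0, task_prior), (0, return_pmf k)}"
      by (auto simp: data_hstate_def)
    have "data_hstate k ` {0, 1} \<subseteq> data_hstate k ` {..<Hp}"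
      using Hp by (intro image_mono) auto
    then show "{(0, task_prior), (0, return_pmf k)} \<subseteq> data_hstate k ` {..<Hp}"
      by (simp add: data_hstate_def)
  qed
  have "set_pmf (data_dist (trap_bamdp Hp) safe_behaviour) =
      (\<Union>k\<in>{0, 1}. (\<lambda>x. (x, k, 1, 0, return_pmf k)) ` data_hstate k ` {..<Hp})"
    by (force simp: data_dist_def times dtuple_safe safe_behaviour_def)
  also have "\<dots> = ?data"
    unfolding hstates by auto
  finally show ?thesis .
qed

lemma in_data_trap_iff:
  "in_data (trap_bamdp Hp) safe_behaviour x a \<longleftrightarrow>
     a \<in> {0, 1} \<and> (x = (0, task_prior) \<or> x = (0, return_pmf a))"
  unfolding in_data_def set_data_dist_trap by auto

lemma return_pmf_neq_task_prior: "return_pmf k \<noteq> task_prior"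
proof
  assume "return_pmf k = task_prior"
  then have "set_pmf (return_pmf k) = set_pmf task_prior" by simp
  then show False by auto
qed

lemma emp_trap:
  assumes "a \<in> {0, 1}" "x = (0, task_prior) \<or> x = (0, return_pmf a)"
  shows "emp (trap_bamdp Hp) safe_behaviour x a = return_pmf (1, 0, return_pmf a)"
proof -
  have "set_pmf (data_dist (trap_bamdp Hp) safe_behaviour) \<inter> {y. fst y = x \<and> fst (snd y) = a}
          = {(x, a, 1, 0, return_pmf a)}"
    unfolding set_data_dist_trap using assms return_pmf_neq_task_prior by auto
  then show ?thesis unfolding emp_def by (simp add: cond_pmf_eq_return_pmf)
qed

context
  fixes \<pi> :: metapolicy
  assumes actions: "\<forall>x. set_pmf (\<pi> x) \<subseteq> {0, 1}"
    and batch: "batch_constrained (trap_bamdp Hp) safe_behaviour \<pi>"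
begin

lemma expectation_metapolicy:
  "measure_pmf.expectation (\<pi> x) f = pmf (\<pi> x) 0 * f 0 + pmf (\<pi> x) 1 * f 1"
  using expectation_pmf_two_point[OF actions[rule_format] zero_neq_one] .

lemma pmf_metapolicy_sum: "pmf (\<pi> x) 0 + pmf (\<pi> x) 1 = 1"
  using pmf_two_point_sum[OF actions[rule_format] zero_neq_one] .

lemma batch_constrained_plays_safe:
  assumes "k \<in> {0, 1}"
  shows "\<pi> (0, return_pmf k) = return_pmf k"
  using batch return_pmf_neq_task_prior assms
  by (intro batch_constrained_forces_action) (auto simp: in_data_trap_iff)

lemma J_off_trap: "J_off (trap_bamdp Hp) safe_behaviour \<pi> = real Hp"
proof -
  obtain m where m: "Hp = Suc m" using Hp by (cases Hp) auto
  have informed: "Voff (trap_bamdp Hp) safe_behaviour \<pi> n (0, return_pmf k) = real n"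
    if "k \<in> {0, 1}" for k n
    using that batch_constrained_plays_safe[OF that] emp_trap[OF that]
    by (induction n) simp_all
  have "J_off (trap_bamdp Hp) safe_behaviour \<pi>
      = Voff (trap_bamdp Hp) safe_behaviour \<pi> (Suc m) (0, task_prior)"
    by (simp add: J_off_def m)
  also have "\<dots> = (pmf (\<pi> (0, task_prior)) 0 + pmf (\<pi> (0, task_prior)) 1) * (1 + real m)"
    by (simp add: expectation_metapolicy emp_trap informed distrib_right)
  also have "\<dots> = real Hp"
    using pmf_metapolicy_sum m by simp
  finally show ?thesis .
qed

lemma Vtrue_initial:
  assumes "k \<in> {0, 1}"
  shows "Vtrue (trap_bamdp Hp) \<pi> k Hp 0 (0, task_prior)
           = 1 + real (Hp - 1) * pmf (\<pi> (0, task_prior)) k"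
proof -
  obtain m where m: "Hp = Suc m" using Hp by (cases Hp) auto
  have "Suc 0 mod Hp \<noteq> 0" using Hp by simp
  then have "trap_obs Hp k 0 0 a = (1, if a = k then 0 else 1)" for a
    by (simp add: trap_obs_def)
  then have first_step: "step (trap_bamdp Hp) k 0 (0, task_prior) a
      = return_pmf (1, (if a = k then 0 else 1), return_pmf k)" if "a \<in> {0, 1}" for a
    using posterior_first_move[OF \<open>Suc 0 mod Hp \<noteq> 0\<close> that assms]
    by (simp add: step_trap_bamdp)
  have "measure_pmf.expectation (step (trap_bamdp Hp) k 0 (0, task_prior) a)
          (\<lambda>(r, x'). r + Vtrue (trap_bamdp Hp) \<pi> k m (Suc 0) x')
        = 1 + (if a = k then real m else 0)" if "a \<in> {0, 1}" for a
    using first_step[OF that] m Vtrue_trapped[of "Suc 0" m Hp]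
      Vtrue_informed[of \<pi> k, OF batch_constrained_plays_safe[OF assms]] by simp
  then have "Vtrue (trap_bamdp Hp) \<pi> k (Suc m) 0 (0, task_prior)
      = pmf (\<pi> (0, task_prior)) 0 * (1 + (if k = 0 then real m else 0))
        + pmf (\<pi> (0, task_prior)) 1 * (1 + (if k = 1 then real m else 0))"
    by (simp add: expectation_metapolicy)
  also have "\<dots> = 1 + real m * pmf (\<pi> (0, task_prior)) k"
    using assms pmf_metapolicy_sum[of "(0, task_prior)"] by (auto simp: algebra_simps)
  finally show ?thesis by (simp add: m)
qed

lemma J_true_trap: "J_true (trap_bamdp Hp) \<pi> = 1 + (real Hp - 1) / 2"
proof -
  have "J_true (trap_bamdp Hp) \<pi> = (Vtrue (trap_bamdp Hp) \<pi> 0 Hp 0 (0, task_prior)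
      + Vtrue (trap_bamdp Hp) \<pi> 1 Hp 0 (0, task_prior)) / 2"
    by (simp add: J_true_def integral_pmf_of_set)
  also have "\<dots> = (2 + real (Hp - 1)
      * (pmf (\<pi> (0, task_prior)) 0 + pmf (\<pi> (0, task_prior)) 1)) / 2"
    using Vtrue_initial[of 0] Vtrue_initial[of 1] by (simp add: algebra_simps)
  also have "\<dots> = 1 + (real Hp - 1) / 2"
    using Hp pmf_metapolicy_sum[of "(0, task_prior)"] by (simp add: of_nat_diff field_simps)
  finally show ?thesis .
qed

end

lemma visits_ood_trap:
  assumes "\<forall>x. set_pmf (\<pi> x) \<subseteq> {0, 1}"
  shows "visits_ood (trap_bamdp Hp) safe_behaviour \<pi>"
proof -
  obtain a where a: "a \<in> set_pmf (\<pi> (0, task_prior))"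
    using set_pmf_not_empty by fastforce
  define k where "k = 1 - a"
  have "a \<in> {0, 1}" using a assms by blast
  then have k: "k \<in> {0, 1}" "a \<noteq> k" by (auto simp: k_def)
  define x' where "x' = (1 :: nat,
    posterior task_prior (\<lambda>k'. return_pmf (trap_obs Hp k' 0 0 a)) (trap_obs Hp k 0 0 a))"
  have "Suc 0 mod Hp \<noteq> 0" using Hp by simp
  with k have trapped: "(1, x') \<in> set_pmf (step (trap_bamdp Hp) k 0 (0, task_prior) a)"
    by (simp add: step_trap_bamdp trap_obs_def x'_def)
  have "visits (trap_bamdp Hp) \<pi> k 0 (0, task_prior)"
    using visits.init[of "trap_bamdp Hp" \<pi> k] by simp
  then have "visits (trap_bamdp Hp) \<pi> k (Suc 0) x'"
    using Hp
    by (intro visits.step_visit[where \<pi> = \<pi> and x = "(0, task_prior)", OF _ _ a trapped])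
      simp_all
  moreover have "\<not> hs_in_data (trap_bamdp Hp) safe_behaviour x'"
    by (auto simp: hs_in_data_def in_data_trap_iff x'_def)
  ultimately show ?thesis
    unfolding visits_ood_def using k by (intro bexI[of _ k] exI[of _ "Suc 0"] exI[of _ x']) auto
qed

lemma valid_setting_trap: "valid_setting (trap_bamdp Hp) safe_behaviour"
  using Hp by (auto simp: valid_setting_def trap_bamdp_def safe_behaviour_def)

end

theorem proposition1:
  fixes Hp :: nat
  assumes "Hp \<ge> 2"
  shows "\<exists>(M :: bamdp) (mu :: behaviour).
           valid_setting M mu \<and> Hplus M = Hp \<and>
           (\<forall>\<pi> :: metapolicy.
              (\<forall>x. set_pmf (\<pi> x) \<subseteq> actions M) \<longrightarrow> batch_constrained M mu \<pi> \<longrightarrow>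
              visits_ood M mu \<pi> \<and>
              \<bar>J_off M mu \<pi> - J_true M \<pi>\<bar> \<ge> (real Hp - 1) / 2)"
proof (intro exI conjI allI impI)
  show "valid_setting (trap_bamdp Hp) safe_behaviour"
    using valid_setting_trap[OF assms] .
  show "Hplus (trap_bamdp Hp) = Hp" by simp
  fix \<pi> :: metapolicy
  assume "\<forall>x. set_pmf (\<pi> x) \<subseteq> actions (trap_bamdp Hp)"
    and batch: "batch_constrained (trap_bamdp Hp) safe_behaviour \<pi>"
  then have actions: "\<forall>x. set_pmf (\<pi> x) \<subseteq> {0, 1}" by simp
  show "visits_ood (trap_bamdp Hp) safe_behaviour \<pi>"
    using visits_ood_trap[OF assms actions] .
  show "\<bar>J_off (trap_bamdp Hp) safe_behaviour \<pi> - J_true (trap_bamdp Hp) \<pi>\<bar>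
          \<ge> (real Hp - 1) / 2"
    using J_off_trap[OF assms actions batch] J_true_trap[OF assms actions batch]
    by (simp add: abs_if field_simps)
qed

end
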